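(* Let $\gamma:[0,l]\times[0,w)\to E_1^4$, $(s,t)\mapsto\gamma(s,t)$, be a smooth inextensible one-parameter family of partially null curves in $E_1^4$ parametrized by arclength ($\|\partial\gamma/\partial s\|\equiv1$), with Frenet frame $\{T,N,B_1,B_2\}$, curvatures $k_1,k_2$ (and $k_3\equiv0$), and write $$\frac{\partial\gamma}{\partial t}=\beta_1T+\beta_2N+\beta_3B_1+\beta_4B_2$$ with smooth scalar functions $\beta_i$. Put $\psi_1=\langle\frac{\partial N}{\partial t},B_1\rangle$ and $\psi_2=\langle\frac{\partial N}{\partial t},B_2\rangle$. Then, at points where $\psi_1\neq0$, $$k_1=\frac{1}{\psi_1}\frac{\partial^2\beta_4}{\partial s^2},$$ and $$\frac{\partial^2\beta_3}{\partial s^2}+\frac{\partial(\beta_2k_2)}{\partial s}+\frac{\partial\beta_2}{\partial s}k_2+\beta_1k_1k_2-\beta_4k_2^2-\psi_2k_1=0.$$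
   Context: $E_1^4$ is $\mathbb{R}^4$ with the Lorentzian metric $\langle x,y\rangle=-x_1y_1+x_2y_2+x_3y_3+x_4y_4$ and $\|x\|=\sqrt{|\langle x,x\rangle|}$. A partially null curve is a spacelike curve whose first binormal is a null vector. For such a curve parametrized by arclength $s$, its Frenet frame $\{T,N,B_1,B_2\}$ ($T=\partial\gamma/\partial s$) satisfies $\langle T,T\rangle=\langle N,N\rangle=1$, $\langle B_1,B_1\rangle=\langle B_2,B_2\rangle=0$, $\langle B_1,B_2\rangle=1$, all other inner products zero, and the Frenet equations $T'=k_1N$, $N'=-k_1T+k_2B_1$, $B_1'=k_3B_1$, $B_2'=-k_2N-k_3B_2$, with $k_3\equiv0$. In the family, each $s\mapsto\gamma(s,t)$ is such a curve and frame and curvatures are smooth in $(s,t)$. The flow is inextensible if $\frac{\partial}{\partial t}\|\partial\gamma/\partial u\|=0$. *)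

theory Defs
  imports "HOL-Analysis.Analysis"
begin

text \<open>Minkowski space E_1^4: vectors in real^4, components indexed 1,2,3,4
  (in the numeral type 4 these are four distinct indices).\<close>

definition lor :: "real^4 \<Rightarrow> real^4 \<Rightarrow> real" where
  "lor x y = - (x$1 * y$1) + x$2 * y$2 + x$3 * y$3 + x$4 * y$4"

definition lnorm :: "real^4 \<Rightarrow> real" where
  "lnorm x = sqrt \<bar>lor x x\<bar>"

definition pd_s :: "(real \<times> real \<Rightarrow> 'a::real_normed_vector) \<Rightarrow> real \<times> real \<Rightarrow> 'a" where
  "pd_s f p = vector_derivative (\<lambda>x. f (x, snd p)) (at (fst p))"

definition pd_t :: "(real \<times> real \<Rightarrow> 'a::real_normed_vector) \<Rightarrow> real \<times> real \<Rightarrow> 'a" where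
  "pd_t f p = vector_derivative (\<lambda>y. f (fst p, y)) (at (snd p))"

definition iter_pd :: "bool list \<Rightarrow> (real \<times> real \<Rightarrow> 'a::real_normed_vector) \<Rightarrow> real \<times> real \<Rightarrow> 'a" where
  "iter_pd ds f = fold (\<lambda>b g. if b then pd_s g else pd_t g) ds f"

definition smooth_on :: "(real \<times> real) set \<Rightarrow> (real \<times> real \<Rightarrow> 'a::real_normed_vector) \<Rightarrow> bool" where
  "smooth_on U f \<longleftrightarrow> open U \<and>
     (\<forall>ds. continuous_on U (iter_pd ds f) \<and>
       (\<forall>p\<in>U. (\<lambda>x. iter_pd ds f (x, snd p)) differentiable (at (fst p)) \<and>
               (\<lambda>y. iter_pd ds f (fst p, y)) differentiable (at (snd p))))"

end

theory Submission
  imports Defs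
begin

text \<open>Since \<open>T = \<gamma>\<^sub>s\<close>, symmetry of mixed partials gives \<open>T\<^sub>t = (\<gamma>\<^sub>t)\<^sub>s\<close>; differentiating the
  frame expansion of \<open>\<gamma>\<^sub>t\<close> with the Frenet equations yields \<open>\<langle>T\<^sub>t, B\<^sub>1\<rangle> = \<beta>\<^sub>4'\<close> and
  \<open>\<langle>T\<^sub>t, B\<^sub>2\<rangle> = \<beta>\<^sub>2 k\<^sub>2 + \<beta>\<^sub>3'\<close>. Differentiating these once more in \<open>s\<close>, with
  \<open>(T\<^sub>t)\<^sub>s = (k\<^sub>1 N)\<^sub>t\<close>, \<open>B\<^sub>1' = 0\<close> and \<open>B\<^sub>2' = -k\<^sub>2 N\<close>, gives \<open>\<beta>\<^sub>4'' = k\<^sub>1 \<psi>\<^sub>1\<close> and the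
  second identity.\<close>

lemma iter_pd_Nil [simp]: "iter_pd [] f = f"
  by (simp add: iter_pd_def)

lemma iter_pd_pd_s: "iter_pd ds (pd_s f) = iter_pd (True # ds) f"
  and iter_pd_pd_t: "iter_pd ds (pd_t f) = iter_pd (False # ds) f"
  by (simp_all add: iter_pd_def)

lemma smooth_on_pd_s: "smooth_on U f \<Longrightarrow> smooth_on U (pd_s f)"
  unfolding smooth_on_def iter_pd_pd_s by blast

lemma smooth_on_pd_t: "smooth_on U f \<Longrightarrow> smooth_on U (pd_t f)"
  unfolding smooth_on_def iter_pd_pd_t by blast

lemma smooth_on_continuous_on: "smooth_on U f \<Longrightarrow> continuous_on U f"
  unfolding smooth_on_def by (metis iter_pd_Nil)

lemma has_vector_derivative_pd_s:
  assumes "smooth_on U f" "q \<in> U"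
  shows "((\<lambda>x. f (x, snd q)) has_vector_derivative pd_s f q) (at (fst q))"
proof -
  have "(\<lambda>x. f (x, snd q)) differentiable (at (fst q))"
    using assms unfolding smooth_on_def by (metis iter_pd_Nil)
  then show ?thesis
    unfolding pd_s_def by (rule vector_derivative_works[THEN iffD1])
qed

lemma has_vector_derivative_pd_t:
  assumes "smooth_on U f" "q \<in> U"
  shows "((\<lambda>y. f (fst q, y)) has_vector_derivative pd_t f q) (at (snd q))"
proof -
  have "(\<lambda>y. f (fst q, y)) differentiable (at (snd q))"
    using assms unfolding smooth_on_def by (metis iter_pd_Nil)
  then show ?thesis
    unfolding pd_t_def by (rule vector_derivative_works[THEN iffD1])
qed

lemma has_vector_derivative_pd_s_bilinear:
  fixes prod :: "'a::real_normed_vector \<Rightarrow> 'b::real_normed_vector \<Rightarrow> 'c::real_normed_vector"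
  assumes "bounded_bilinear prod" "smooth_on U f" "smooth_on U g" "q \<in> U"
  shows "((\<lambda>x. prod (f (x, snd q)) (g (x, snd q))) has_vector_derivative
    prod (f q) (pd_s g q) + prod (pd_s f q) (g q)) (at (fst q))"
  using bounded_bilinear.has_vector_derivative[OF assms(1)
      has_vector_derivative_pd_s[OF assms(2,4)] has_vector_derivative_pd_s[OF assms(3,4)]]
  by simp

lemma has_vector_derivative_pd_t_bilinear:
  fixes prod :: "'a::real_normed_vector \<Rightarrow> 'b::real_normed_vector \<Rightarrow> 'c::real_normed_vector"
  assumes "bounded_bilinear prod" "smooth_on U f" "smooth_on U g" "q \<in> U"
  shows "((\<lambda>y. prod (f (fst q, y)) (g (fst q, y))) has_vector_derivative
    prod (f q) (pd_t g q) + prod (pd_t f q) (g q)) (at (snd q))"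
  using bounded_bilinear.has_vector_derivative[OF assms(1)
      has_vector_derivative_pd_t[OF assms(2,4)] has_vector_derivative_pd_t[OF assms(3,4)]]
  by simp

lemma pd_s_mult:
  fixes f g :: "real \<times> real \<Rightarrow> real"
  assumes "smooth_on U f" "smooth_on U g" "q \<in> U"
  shows "pd_s (\<lambda>q. f q * g q) q = f q * pd_s g q + pd_s f q * g q"
  using vector_derivative_at[OF has_vector_derivative_pd_s_bilinear[OF bounded_bilinear_mult assms]]
  by (simp add: pd_s_def)

lemma has_vector_derivative_unique_eq_on:
  fixes f g :: "real \<Rightarrow> 'a::real_normed_vector"
  assumes "a < b" "x \<in> {a..b}"
    and "(f has_vector_derivative f') (at x)" "(g has_vector_derivative g') (at x)"
    and "\<And>y. y \<in> {a..b} \<Longrightarrow> f y = g y"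
  shows "f' = g'"
proof -
  have "(g has_vector_derivative f') (at x within {a..b})"
    by (rule has_vector_derivative_transform_within[of f f' x "{a..b}" 1])
      (use assms in \<open>auto intro: has_vector_derivative_at_within\<close>)
  moreover have "(g has_vector_derivative g') (at x within {a..b})"
    using assms(4) by (rule has_vector_derivative_at_within)
  ultimately show ?thesis
    using vector_derivative_unique_within_closed_interval[of a b x g] assms(1,2) by simp
qed

lemma open_contains_square:
  fixes s t :: real
  assumes "open U" "(s, t) \<in> U"
  obtains r where "r > 0" "{s - r..s + r} \<times> {t - r..t + r} \<subseteq> U"
proof -
  obtain e where e: "e > 0" "cball (s, t) e \<subseteq> U"
    using open_contains_cball assms by blast
  have "(x, y) \<in> U" if "(x, y) \<in> {s - e/2..s + e/2} \<times> {t - e/2..t + e/2}" for x y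
  proof -
    have "dist (s, t) (x, y) \<le> \<bar>s - x\<bar> + \<bar>t - y\<bar>"
      unfolding dist_Pair_Pair dist_real_def by (metis sqrt_sum_squares_le_sum_abs power2_abs)
    also have "\<dots> \<le> e" using that by auto
    finally show ?thesis using e by auto
  qed
  then show thesis
    using that[of "e/2"] e by (auto simp: subset_iff)
qed

lemma integral_pd_s:
  fixes f :: "real \<times> real \<Rightarrow> 'a::banach"
  assumes "smooth_on U f" "a \<le> x" "{a..x} \<times> {y} \<subseteq> U"
  shows "f (x, y) = f (a, y) + integral {a..x} (\<lambda>\<sigma>. pd_s f (\<sigma>, y))"
proof -
  have "((\<lambda>\<sigma>. pd_s f (\<sigma>, y)) has_integral f (x, y) - f (a, y)) {a..x}"
  proof (rule fundamental_theorem_of_calculus[OF \<open>a \<le> x\<close>])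
    fix \<sigma> assume "\<sigma> \<in> {a..x}"
    with assms(3) have "(\<sigma>, y) \<in> U" by auto
    from has_vector_derivative_pd_s[OF assms(1) this]
    have "((\<lambda>\<sigma>. f (\<sigma>, y)) has_vector_derivative pd_s f (\<sigma>, y)) (at \<sigma>)" by simp
    then show "((\<lambda>\<sigma>. f (\<sigma>, y)) has_vector_derivative pd_s f (\<sigma>, y)) (at \<sigma> within {a..x})"
      by (rule has_vector_derivative_at_within)
  qed
  then show ?thesis by (simp add: integral_unique)
qed

lemma has_vector_derivative_integral_pd_t:
  fixes g :: "real \<times> real \<Rightarrow> 'a::banach"
  assumes g: "smooth_on U g" and box: "{a..b} \<times> {c..d} \<subseteq> U" and t: "t \<in> {c<..<d}"
  shows "((\<lambda>y. integral {a..b} (\<lambda>\<sigma>. g (\<sigma>, y))) has_vector_derivative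
    integral {a..b} (\<lambda>\<sigma>. pd_t g (\<sigma>, t))) (at t)"
proof -
  have inU: "(\<sigma>, y) \<in> U" if "\<sigma> \<in> {a..b}" "y \<in> {c..d}" for \<sigma> y
    using that box by auto
  have "((\<lambda>y. integral (cbox a b) (\<lambda>\<sigma>. g (\<sigma>, y))) has_vector_derivative
      integral (cbox a b) (\<lambda>\<sigma>. pd_t g (\<sigma>, t))) (at t within {c<..<d})"
  proof (rule leibniz_rule_vector_derivative)
    fix y \<sigma> assume "y \<in> {c<..<d}" "\<sigma> \<in> cbox a b"
    then show "((\<lambda>y. g (\<sigma>, y)) has_vector_derivative pd_t g (\<sigma>, y)) (at y within {c<..<d})"
      using has_vector_derivative_pd_t[OF g, of "(\<sigma>, y)"] inU
      by (auto intro: has_vector_derivative_at_within)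
  next
    fix y assume "y \<in> {c<..<d}"
    then have "continuous_on {a..b} (\<lambda>\<sigma>. g (\<sigma>, y))"
      by (intro continuous_on_compose2[OF smooth_on_continuous_on[OF g]])
        (auto intro!: continuous_intros inU)
    then show "(\<lambda>\<sigma>. g (\<sigma>, y)) integrable_on cbox a b"
      by (simp add: integrable_continuous_real)
  next
    have "continuous_on ({c<..<d} \<times> cbox a b) (\<lambda>z. pd_t g (snd z, fst z))"
      by (intro continuous_on_compose2[OF smooth_on_continuous_on[OF smooth_on_pd_t[OF g]]])
        (auto intro!: continuous_intros inU)
    then show "continuous_on ({c<..<d} \<times> cbox a b) (\<lambda>(y, \<sigma>). pd_t g (\<sigma>, y))"
      by (simp add: split_beta)
  qed (use t in auto)
  then show ?thesis
    using t by (simp add: at_within_open[of t "{c<..<d}"])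
qed

lemma pd_t_integral_pd_s:
  fixes f :: "real \<times> real \<Rightarrow> 'a::banach"
  assumes f: "smooth_on U f" and box: "{a..b} \<times> {c..d} \<subseteq> U"
    and x: "x \<in> {a..b}" and t: "t \<in> {c<..<d}"
  shows "pd_t f (x, t) = pd_t f (a, t) + integral {a..x} (\<lambda>\<sigma>. pd_t (pd_s f) (\<sigma>, t))"
proof -
  have box': "{a..x} \<times> {c..d} \<subseteq> U"
    using box x by auto
  have inU: "(\<sigma>, y) \<in> U" if "\<sigma> \<in> {a..x}" "y \<in> {c..d}" for \<sigma> y
    using that box' by auto
  have rhs: "((\<lambda>y. f (a, y) + integral {a..x} (\<lambda>\<sigma>. pd_s f (\<sigma>, y))) has_vector_derivative
      pd_t f (a, t) + integral {a..x} (\<lambda>\<sigma>. pd_t (pd_s f) (\<sigma>, t))) (at t)"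
  proof (rule has_vector_derivative_add)
    show "((\<lambda>y. f (a, y)) has_vector_derivative pd_t f (a, t)) (at t)"
      using has_vector_derivative_pd_t[OF f inU[of a t]] x t by simp
  qed (rule has_vector_derivative_integral_pd_t[OF smooth_on_pd_s[OF f] box' t])
  have lhs: "((\<lambda>y. f (x, y)) has_vector_derivative pd_t f (x, t)) (at t)"
    using has_vector_derivative_pd_t[OF f inU[of x t]] x t by simp
  have "f (x, y) = f (a, y) + integral {a..x} (\<lambda>\<sigma>. pd_s f (\<sigma>, y))" if "y \<in> {c..d}" for y
    by (rule integral_pd_s[OF f]) (use x that box' in auto)
  from has_vector_derivative_unique_eq_on[of c d t, OF _ _ lhs rhs this] t show ?thesis by simp
qed

lemma pd_s_pd_t_commute:
  fixes f :: "real \<times> real \<Rightarrow> 'a::banach"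
  assumes f: "smooth_on U f" and q: "q \<in> U"
  shows "pd_s (pd_t f) q = pd_t (pd_s f) q"
proof -
  obtain s t where q_eq: "q = (s, t)" by (cases q)
  obtain r where r: "r > 0" and box: "{s - r..s + r} \<times> {t - r..t + r} \<subseteq> U"
    using open_contains_square f q unfolding q_eq smooth_on_def by metis
  have cont: "continuous_on {s - r..s + r} (\<lambda>\<sigma>. pd_t (pd_s f) (\<sigma>, t))"
    using box r
    by (intro continuous_on_compose2[OF smooth_on_continuous_on[OF smooth_on_pd_t[OF smooth_on_pd_s[OF f]]]])
      (auto intro!: continuous_intros)
  have "((\<lambda>x. integral {s - r..x} (\<lambda>\<sigma>. pd_t (pd_s f) (\<sigma>, t)))
      has_vector_derivative pd_t (pd_s f) (s, t)) (at s)"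
    using integral_has_vector_derivative[OF cont, of s] r by (simp add: at_within_Icc_at)
  then have rhs: "((\<lambda>x. pd_t f (s - r, t) + integral {s - r..x} (\<lambda>\<sigma>. pd_t (pd_s f) (\<sigma>, t)))
      has_vector_derivative pd_t (pd_s f) (s, t)) (at s)"
    using has_vector_derivative_add[OF has_vector_derivative_const] by simp
  have lhs: "((\<lambda>x. pd_t f (x, t)) has_vector_derivative pd_s (pd_t f) (s, t)) (at s)"
    using has_vector_derivative_pd_s[OF smooth_on_pd_t[OF f] q] q_eq by simp
  have "pd_t f (x, t) = pd_t f (s - r, t) + integral {s - r..x} (\<lambda>\<sigma>. pd_t (pd_s f) (\<sigma>, t))"
    if "x \<in> {s - r..s + r}" for x
    by (rule pd_t_integral_pd_s[OF f box that]) (use r in auto)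
  from has_vector_derivative_unique_eq_on[of "s - r" "s + r" s, OF _ _ lhs rhs this] r q_eq
  show ?thesis by simp
qed

lemma lor_add_left [simp]: "lor (x + y) z = lor x z + lor y z"
  and lor_add_right [simp]: "lor z (x + y) = lor z x + lor z y"
  and lor_scaleR_left [simp]: "lor (c *\<^sub>R x) z = c * lor x z"
  and lor_scaleR_right [simp]: "lor z (c *\<^sub>R x) = c * lor z x"
  and lor_zero_right [simp]: "lor z 0 = 0"
  and lor_minus_right [simp]: "lor z (- x) = - lor z x"
  by (simp_all add: lor_def algebra_simps)

lemma lor_commute: "lor x y = lor y x"
  by (simp add: lor_def mult.commute)

lemma bounded_bilinear_lor: "bounded_bilinear lor"
proof (rule bounded_bilinear.intro)
  fix a a' b b' :: "real^4" and r :: real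
  show "lor (a + a') b = lor a b + lor a' b" "lor a (b + b') = lor a b + lor a b'"
    "lor (r *\<^sub>R a) b = r *\<^sub>R lor a b" "lor a (r *\<^sub>R b) = r *\<^sub>R lor a b"
    by simp_all
next
  have component: "\<bar>a$i * b$i\<bar> \<le> norm a * norm b" for a b :: "real^4" and i
    unfolding abs_mult by (intro mult_mono component_le_norm_cart) auto
  have "norm (lor a b) \<le> norm a * norm b * 4" for a b
    using component[of a 1 b] component[of a 2 b] component[of a 3 b] component[of a 4 b]
    unfolding lor_def real_norm_def by linarith
  then show "\<exists>K. \<forall>a b. norm (lor a b) \<le> norm a * norm b * K" by blast
qed

locale partially_null_variation =
  fixes \<gamma> T N B1 B2 :: "real \<times> real \<Rightarrow> real^4"
    and k1 k2 \<beta>1 \<beta>2 \<beta>3 \<beta>4 :: "real \<times> real \<Rightarrow> real"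
    and l w :: real and U :: "(real \<times> real) set"
  assumes l_pos: "0 < l"
    and D_subset: "{0..l} \<times> {0..<w} \<subseteq> U"
    and \<gamma>_smooth: "smooth_on U \<gamma>" and T_smooth: "smooth_on U T" and N_smooth: "smooth_on U N"
    and B1_smooth: "smooth_on U B1" and B2_smooth: "smooth_on U B2"
    and k1_smooth: "smooth_on U k1" and k2_smooth: "smooth_on U k2"
    and \<beta>1_smooth: "smooth_on U \<beta>1" and \<beta>2_smooth: "smooth_on U \<beta>2"
    and \<beta>3_smooth: "smooth_on U \<beta>3" and \<beta>4_smooth: "smooth_on U \<beta>4"
    and tangent: "\<And>p. p \<in> {0..l} \<times> {0..<w} \<Longrightarrow> T p = pd_s \<gamma> p"
    and frame: "\<And>p. p \<in> {0..l} \<times> {0..<w} \<Longrightarrow>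
      lor (T p) (T p) = 1 \<and> lor (N p) (N p) = 1 \<and>
      lor (B1 p) (B1 p) = 0 \<and> lor (B2 p) (B2 p) = 0 \<and> lor (B1 p) (B2 p) = 1 \<and>
      lor (T p) (N p) = 0 \<and> lor (T p) (B1 p) = 0 \<and> lor (T p) (B2 p) = 0 \<and>
      lor (N p) (B1 p) = 0 \<and> lor (N p) (B2 p) = 0"
    and frenet: "\<And>p. p \<in> {0..l} \<times> {0..<w} \<Longrightarrow>
      pd_s T p = k1 p *\<^sub>R N p \<and>
      pd_s N p = - k1 p *\<^sub>R T p + k2 p *\<^sub>R B1 p \<and>
      pd_s B1 p = 0 \<and>
      pd_s B2 p = - k2 p *\<^sub>R N p"
    and variation: "\<And>p. p \<in> {0..l} \<times> {0..<w} \<Longrightarrow>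
      pd_t \<gamma> p = \<beta>1 p *\<^sub>R T p + \<beta>2 p *\<^sub>R N p + \<beta>3 p *\<^sub>R B1 p + \<beta>4 p *\<^sub>R B2 p"
begin

abbreviation D :: "(real \<times> real) set" where "D \<equiv> {0..l} \<times> {0..<w}"

lemma in_U: "q \<in> D \<Longrightarrow> q \<in> U"
  using D_subset by auto

lemma frame_sym:
  assumes "q \<in> D"
  shows "lor (N q) (T q) = 0" "lor (B1 q) (T q) = 0" "lor (B2 q) (T q) = 0"
    "lor (B1 q) (N q) = 0" "lor (B2 q) (N q) = 0" "lor (B2 q) (B1 q) = 1"
  using frame[OF assms] by (simp_all add: lor_commute)

text \<open>The structure equations hold only on \<open>D\<close>, which is closed in \<open>s\<close> and half-open in \<open>t\<close>, while
  \<open>pd_s\<close> and \<open>pd_t\<close> are two-sided derivatives; agreement on a nondegenerate interval through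
  the point already determines them.\<close>

lemma pd_s_unique_on_D:
  assumes "p \<in> D"
    and "((\<lambda>x. f (x, snd p)) has_vector_derivative f') (at (fst p))"
    and "((\<lambda>x. g (x, snd p)) has_vector_derivative g') (at (fst p))"
    and "\<And>q. q \<in> D \<Longrightarrow> f q = g q"
  shows "f' = g'"
  by (rule has_vector_derivative_unique_eq_on[OF l_pos _ assms(2,3)])
    (use assms(1,4) in \<open>auto simp: mem_Times_iff\<close>)

lemma pd_t_unique_on_D:
  assumes "p \<in> D"
    and "((\<lambda>y. f (fst p, y)) has_vector_derivative f') (at (snd p))"
    and "((\<lambda>y. g (fst p, y)) has_vector_derivative g') (at (snd p))"
    and "\<And>q. q \<in> D \<Longrightarrow> f q = g q"
  shows "f' = g'"
  by (rule has_vector_derivative_unique_eq_on[of "snd p" "(snd p + w) / 2", OF _ _ assms(2,3)])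
    (use assms(1,4) in \<open>auto simp: mem_Times_iff\<close>)

lemma pd_t_T:
  assumes q: "q \<in> D"
  shows "pd_t T q = (pd_s \<beta>1 q - \<beta>2 q * k1 q) *\<^sub>R T q
    + (\<beta>1 q * k1 q + pd_s \<beta>2 q - \<beta>4 q * k2 q) *\<^sub>R N q
    + (\<beta>2 q * k2 q + pd_s \<beta>3 q) *\<^sub>R B1 q + pd_s \<beta>4 q *\<^sub>R B2 q"
    (is "_ = ?rhs")
proof -
  note qU = in_U[OF q]
  note scaleR = has_vector_derivative_pd_s_bilinear[OF bounded_bilinear_scaleR _ _ qU]
  have "pd_t T q = pd_t (pd_s \<gamma>) q"
    by (rule pd_t_unique_on_D[OF q has_vector_derivative_pd_t[OF T_smooth qU]
          has_vector_derivative_pd_t[OF smooth_on_pd_s[OF \<gamma>_smooth] qU] tangent])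
  also have "\<dots> = pd_s (pd_t \<gamma>) q"
    using pd_s_pd_t_commute[OF \<gamma>_smooth qU] by simp
  also have "\<dots> = (\<beta>1 q *\<^sub>R pd_s T q + pd_s \<beta>1 q *\<^sub>R T q) + (\<beta>2 q *\<^sub>R pd_s N q + pd_s \<beta>2 q *\<^sub>R N q)
      + (\<beta>3 q *\<^sub>R pd_s B1 q + pd_s \<beta>3 q *\<^sub>R B1 q) + (\<beta>4 q *\<^sub>R pd_s B2 q + pd_s \<beta>4 q *\<^sub>R B2 q)"
    by (rule pd_s_unique_on_D[OF q has_vector_derivative_pd_s[OF smooth_on_pd_t[OF \<gamma>_smooth] qU]
          _ variation])
      (intro has_vector_derivative_add scaleR \<beta>1_smooth \<beta>2_smooth \<beta>3_smooth \<beta>4_smooth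
        T_smooth N_smooth B1_smooth B2_smooth)
  also have "\<dots> = ?rhs"
    by (simp add: frenet[OF q] algebra_simps)
  finally show ?thesis .
qed

lemma lor_pd_t_T_N: "q \<in> D \<Longrightarrow> lor (pd_t T q) (N q) = \<beta>1 q * k1 q + pd_s \<beta>2 q - \<beta>4 q * k2 q"
  and lor_pd_t_T_B1: "q \<in> D \<Longrightarrow> lor (pd_t T q) (B1 q) = pd_s \<beta>4 q"
  and lor_pd_t_T_B2: "q \<in> D \<Longrightarrow> lor (pd_t T q) (B2 q) = \<beta>2 q * k2 q + pd_s \<beta>3 q"
  by (simp_all add: pd_t_T frame frame_sym)

lemma pd_s_pd_t_T:
  assumes p: "p \<in> D"
  shows "pd_s (pd_t T) p = pd_t k1 p *\<^sub>R N p + k1 p *\<^sub>R pd_t N p"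
proof -
  note pU = in_U[OF p]
  have "pd_s (pd_t T) p = pd_t (pd_s T) p"
    by (rule pd_s_pd_t_commute[OF T_smooth pU])
  also have "\<dots> = k1 p *\<^sub>R pd_t N p + pd_t k1 p *\<^sub>R N p"
    by (rule pd_t_unique_on_D[OF p has_vector_derivative_pd_t[OF smooth_on_pd_s[OF T_smooth] pU]
          has_vector_derivative_pd_t_bilinear[OF bounded_bilinear_scaleR k1_smooth N_smooth pU]])
      (use frenet in blast)
  finally show ?thesis by simp
qed

lemma pd_s_pd_s_\<beta>4:
  assumes p: "p \<in> D"
  shows "pd_s (pd_s \<beta>4) p = k1 p * lor (pd_t N p) (B1 p)"
proof -
  note pU = in_U[OF p]
  have "lor (pd_t T p) (pd_s B1 p) + lor (pd_s (pd_t T) p) (B1 p) = pd_s (pd_s \<beta>4) p"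
    by (rule pd_s_unique_on_D[OF p
          has_vector_derivative_pd_s_bilinear[OF bounded_bilinear_lor smooth_on_pd_t[OF T_smooth] B1_smooth pU]
          has_vector_derivative_pd_s[OF smooth_on_pd_s[OF \<beta>4_smooth] pU] lor_pd_t_T_B1])
  then show ?thesis
    by (simp add: pd_s_pd_t_T[OF p] frenet[OF p] frame[OF p])
qed

lemma pd_s_pd_s_\<beta>3:
  assumes p: "p \<in> D"
  shows "pd_s (pd_s \<beta>3) p + pd_s (\<lambda>q. \<beta>2 q * k2 q) p
    = k1 p * lor (pd_t N p) (B2 p) - k2 p * (\<beta>1 p * k1 p + pd_s \<beta>2 p - \<beta>4 p * k2 p)"
proof -
  note pU = in_U[OF p]
  have "lor (pd_t T p) (pd_s B2 p) + lor (pd_s (pd_t T) p) (B2 p)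
      = (\<beta>2 p * pd_s k2 p + pd_s \<beta>2 p * k2 p) + pd_s (pd_s \<beta>3) p"
    by (rule pd_s_unique_on_D[OF p
          has_vector_derivative_pd_s_bilinear[OF bounded_bilinear_lor smooth_on_pd_t[OF T_smooth] B2_smooth pU]
          has_vector_derivative_add[OF
            has_vector_derivative_pd_s_bilinear[OF bounded_bilinear_mult \<beta>2_smooth k2_smooth pU]
            has_vector_derivative_pd_s[OF smooth_on_pd_s[OF \<beta>3_smooth] pU]]
          lor_pd_t_T_B2])
  then show ?thesis
    by (simp add: pd_s_mult[OF \<beta>2_smooth k2_smooth pU] pd_s_pd_t_T[OF p] frenet[OF p] frame[OF p]
        lor_pd_t_T_N[OF p] algebra_simps)
qed

end

theorem corollary3p7:
  fixes \<gamma> T N B1 B2 :: "real \<times> real \<Rightarrow> real^4"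
    and k1 k2 \<beta>1 \<beta>2 \<beta>3 \<beta>4 :: "real \<times> real \<Rightarrow> real"
    and l w :: real and U :: "(real \<times> real) set"
  defines "D \<equiv> {0..l} \<times> {0..<w}"
  defines "\<psi>1 \<equiv> (\<lambda>p. lor (pd_t N p) (B1 p))"
  defines "\<psi>2 \<equiv> (\<lambda>p. lor (pd_t N p) (B2 p))"
  assumes lw: "0 < l" "0 < w"
    and U: "D \<subseteq> U"
    and smooth: "smooth_on U \<gamma>" "smooth_on U T" "smooth_on U N" "smooth_on U B1"
      "smooth_on U B2" "smooth_on U k1" "smooth_on U k2"
      "smooth_on U \<beta>1" "smooth_on U \<beta>2" "smooth_on U \<beta>3" "smooth_on U \<beta>4"
    and tangent: "\<And>p. p \<in> D \<Longrightarrow> T p = pd_s \<gamma> p"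
    and arclength: "\<And>p. p \<in> D \<Longrightarrow> lnorm (pd_s \<gamma> p) = 1"
    and inextensible: "\<And>p. p \<in> D \<Longrightarrow> pd_t (\<lambda>q. lnorm (pd_s \<gamma> q)) p = 0"
    and frame: "\<And>p. p \<in> D \<Longrightarrow>
      lor (T p) (T p) = 1 \<and> lor (N p) (N p) = 1 \<and>
      lor (B1 p) (B1 p) = 0 \<and> lor (B2 p) (B2 p) = 0 \<and> lor (B1 p) (B2 p) = 1 \<and>
      lor (T p) (N p) = 0 \<and> lor (T p) (B1 p) = 0 \<and> lor (T p) (B2 p) = 0 \<and>
      lor (N p) (B1 p) = 0 \<and> lor (N p) (B2 p) = 0"
    and frenet: "\<And>p. p \<in> D \<Longrightarrow>
      pd_s T p = k1 p *\<^sub>R N p \<and>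
      pd_s N p = - k1 p *\<^sub>R T p + k2 p *\<^sub>R B1 p \<and>
      pd_s B1 p = 0 \<and>
      pd_s B2 p = - k2 p *\<^sub>R N p"
    and variation: "\<And>p. p \<in> D \<Longrightarrow>
      pd_t \<gamma> p = \<beta>1 p *\<^sub>R T p + \<beta>2 p *\<^sub>R N p + \<beta>3 p *\<^sub>R B1 p + \<beta>4 p *\<^sub>R B2 p"
    and p: "p \<in> D"
  shows "(\<psi>1 p \<noteq> 0 \<longrightarrow> k1 p = pd_s (pd_s \<beta>4) p / \<psi>1 p) \<and>
    pd_s (pd_s \<beta>3) p + pd_s (\<lambda>q. \<beta>2 q * k2 q) p + pd_s \<beta>2 p * k2 p
      + \<beta>1 p * k1 p * k2 p - \<beta>4 p * (k2 p)^2 - \<psi>2 p * k1 p = 0"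
proof -
  interpret partially_null_variation \<gamma> T N B1 B2 k1 k2 \<beta>1 \<beta>2 \<beta>3 \<beta>4 l w U
    using lw(1) U smooth tangent frame frenet variation
    by unfold_locales (simp_all only: D_def)
  show ?thesis
    using pd_s_pd_s_\<beta>4[OF p[unfolded D_def]] pd_s_pd_s_\<beta>3[OF p[unfolded D_def]]
    unfolding \<psi>1_def \<psi>2_def by (auto simp: algebra_simps power2_eq_square)
qed

end
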